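(* Let $t>204$ be an integer and $P(x,y)=x^{4}+4tx^{3}y-6tx^{2}y^{2}-4t^{2}xy^{3}+t^{2}y^{4}$. Fix complex numbers $\alpha,\beta$ with $\alpha^4=1+i\sqrt t$ and $\beta^4=-1+i\sqrt t$, and for integers $x,y$ put $\xi(x,y)=\sqrt2\,\alpha\,(x-i\sqrt t\,y)$, $\eta(x,y)=\sqrt2\,\beta\,(x+i\sqrt t\,y)$ and $z(x,y)=1-\left(\eta(x,y)/\xi(x,y)\right)^4$. Suppose $(x,y)$ is a pair of positive integers with $0<P(x,y)\le t^2$ and $xy>64t^3$, and let $\omega_j\in\{1,i,-1,-i\}$ satisfy $$\left|\omega_j-\frac{\eta(x,y)}{\xi(x,y)}\right|=\min_{0\le k\le 3}\left|e^{k\pi i/2}-\frac{\eta(x,y)}{\xi(x,y)}\right|.$$ Then $\left|\omega_j-\frac{\eta(x,y)}{\xi(x,y)}\right|<\frac{\pi}{12}\,|z(x,y)|$.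
   Context: Note $\xi^4=4(\sqrt{-t}+1)(x-\sqrt{-t}y)^4$, $\eta^4=4(\sqrt{-t}-1)(x+\sqrt{-t}y)^4$ and $P=\frac18(\xi^4-\eta^4)$, with $\sqrt{-t}=i\sqrt t$. *)

theory Defs
  imports Complex_Main
begin

definition Pform :: "int \<Rightarrow> int \<Rightarrow> int \<Rightarrow> int" where
  "Pform t x y = x^4 + 4*t*x^3*y - 6*t*x^2*y^2 - 4*t^2*x*y^3 + t^2*y^4"

definition xi_fn :: "int \<Rightarrow> complex \<Rightarrow> int \<Rightarrow> int \<Rightarrow> complex" where
  "xi_fn t \<alpha> x y = complex_of_real (sqrt 2) * \<alpha> *
     (of_int x - \<i> * complex_of_real (sqrt (of_int t)) * of_int y)"

definition eta_fn :: "int \<Rightarrow> complex \<Rightarrow> int \<Rightarrow> int \<Rightarrow> complex" where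
  "eta_fn t \<beta> x y = complex_of_real (sqrt 2) * \<beta> *
     (of_int x + \<i> * complex_of_real (sqrt (of_int t)) * of_int y)"

definition z_fn :: "int \<Rightarrow> complex \<Rightarrow> complex \<Rightarrow> int \<Rightarrow> int \<Rightarrow> complex" where
  "z_fn t \<alpha> \<beta> x y = 1 - (eta_fn t \<beta> x y / xi_fn t \<alpha> x y) ^ 4"

end

theory Submission
  imports Defs "HOL-Analysis.Complex_Transcendental"
begin

text \<open>
  Since \<open>\<xi>\<^sup>4 - \<eta>\<^sup>4 = 8 P(x, y)\<close> and \<open>|\<xi>|\<^sup>4 \<ge> 4 |x - i\<surd>t y|\<^sup>4 \<ge> 16 (xy)\<^sup>2\<close>, the hypotheses
  \<open>0 < P \<le> t\<^sup>2\<close> and \<open>xy > 64 t\<^sup>3\<close> force \<open>0 < |z| < 1/(8192 t\<^sup>4) < 10\<^sup>-\<^sup>8\<close>, where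
  \<open>z = 1 - u\<^sup>4\<close> for \<open>u = \<eta>/\<xi>\<close>. So \<open>u\<close> is very close to a fourth root of unity. After
  rotating the nearest one \<open>\<omega>\<close> to \<open>1\<close>, write \<open>1 - u\<^sup>4 = (1 - u)(1 + u)(1 + u\<^sup>2)\<close>:
  the first factor is tiny and the other two are close to \<open>2\<close>, so their product exceeds
  \<open>12/\<pi>\<close>.
\<close>

lemma of_real_sqrt2_power4: "complex_of_real (sqrt 2) ^ 4 = 4"
proof -
  have "sqrt (2::real) ^ 4 = 4"
    by (simp add: power4_eq_xxxx)
  then show ?thesis
    by (metis of_real_power of_real_numeral)
qed

lemma xi_fn_power4:
  assumes "\<alpha> ^ 4 = 1 + \<i> * complex_of_real (sqrt (of_int t))"
  shows "xi_fn t \<alpha> x y ^ 4 = 4 * (1 + \<i> * complex_of_real (sqrt (of_int t))) *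
           (of_int x - \<i> * complex_of_real (sqrt (of_int t)) * of_int y) ^ 4"
  unfolding xi_fn_def by (simp add: power_mult_distrib assms of_real_sqrt2_power4)

lemma eta_fn_power4:
  assumes "\<beta> ^ 4 = -1 + \<i> * complex_of_real (sqrt (of_int t))"
  shows "eta_fn t \<beta> x y ^ 4 = 4 * (-1 + \<i> * complex_of_real (sqrt (of_int t))) *
           (of_int x + \<i> * complex_of_real (sqrt (of_int t)) * of_int y) ^ 4"
  unfolding eta_fn_def by (simp add: power_mult_distrib assms of_real_sqrt2_power4)

lemma quartic_form_identity:
  fixes I S T a b :: "'a :: idom"
  assumes "I^2 = -1" and "S^2 = T"
  shows "4 * (1 + I * S) * (a - I * S * b)^4 - 4 * (-1 + I * S) * (a + I * S * b)^4 =
         8 * (a^4 + 4 * T * a^3 * b - 6 * T * a^2 * b^2 - 4 * T^2 * a * b^3 + T^2 * b^4)"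
  using assms by algebra

lemma xi_fn_power4_diff_eta_fn_power4:
  assumes "t \<ge> 0"
    and "\<alpha> ^ 4 = 1 + \<i> * complex_of_real (sqrt (of_int t))"
    and "\<beta> ^ 4 = -1 + \<i> * complex_of_real (sqrt (of_int t))"
  shows "xi_fn t \<alpha> x y ^ 4 - eta_fn t \<beta> x y ^ 4 = 8 * of_int (Pform t x y)"
proof -
  have "complex_of_real (sqrt (of_int t)) ^ 2 = of_int t"
    using assms(1) by (simp flip: of_real_power)
  from quartic_form_identity[OF _ this, of "\<i>" "of_int x" "of_int y"] show ?thesis
    unfolding xi_fn_power4[OF assms(2)] eta_fn_power4[OF assms(3)] Pform_def by simp
qed

lemma norm_xi_fn_power4_ge:
  assumes "t \<ge> 1" and "\<alpha> ^ 4 = 1 + \<i> * complex_of_real (sqrt (of_int t))"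
  shows "16 * of_int (x * y) ^ 2 \<le> cmod (xi_fn t \<alpha> x y ^ 4)"
proof -
  define s where "s = sqrt (of_int t)"
  define X where "X = of_int x - \<i> * complex_of_real s * of_int y"
  have "cmod (1 + \<i> * complex_of_real s) \<ge> 1"
    using abs_Re_le_cmod[of "1 + \<i> * complex_of_real s"] by simp
  moreover have "2 * \<bar>of_int (x * y)\<bar> \<le> cmod X ^ 2"
  proof -
    have "cmod X ^ 2 = of_int x ^ 2 + of_int t * of_int y ^ 2"
      using assms(1) by (simp add: X_def s_def cmod_power2 power_mult_distrib)
    moreover have "of_int y ^ 2 \<le> of_int t * (of_int y ^ 2 :: real)"
      using assms(1) by (simp add: mult_le_cancel_right1)
    ultimately show ?thesis
      using sum_squares_bound[of "\<bar>of_int x\<bar>" "\<bar>of_int y :: real\<bar>"] by (simp add: abs_mult)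
  qed
  then have "(2 * \<bar>of_int (x * y)\<bar>) ^ 2 \<le> (cmod X ^ 2) ^ 2"
    by (rule power_mono) simp
  ultimately have "1 * (4 * of_int (x * y) ^ 2) \<le> cmod (1 + \<i> * complex_of_real s) * cmod X ^ 4"
    by (intro mult_mono) (simp_all add: power_mult_distrib flip: power_mult)
  then show ?thesis
    unfolding xi_fn_power4[OF assms(2)] s_def[symmetric] X_def[symmetric]
    by (simp only: norm_mult norm_power) (simp add: mult.commute)
qed

lemma z_fn_eq:
  assumes "t \<ge> 0"
    and "\<alpha> ^ 4 = 1 + \<i> * complex_of_real (sqrt (of_int t))"
    and "\<beta> ^ 4 = -1 + \<i> * complex_of_real (sqrt (of_int t))"
    and "xi_fn t \<alpha> x y \<noteq> 0"
  shows "z_fn t \<alpha> \<beta> x y = 8 * of_int (Pform t x y) / xi_fn t \<alpha> x y ^ 4"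
  unfolding z_fn_def xi_fn_power4_diff_eta_fn_power4[OF assms(1-3), symmetric]
  using assms(4) by (simp add: power_divide diff_divide_distrib)

lemma norm_z_fn_bounds:
  assumes "t > 204"
    and "\<alpha> ^ 4 = 1 + \<i> * complex_of_real (sqrt (of_int t))"
    and "\<beta> ^ 4 = -1 + \<i> * complex_of_real (sqrt (of_int t))"
    and "0 < Pform t x y" and "Pform t x y \<le> t^2"
    and "x * y > 64 * t^3"
  shows "0 < cmod (z_fn t \<alpha> \<beta> x y)" and "cmod (z_fn t \<alpha> \<beta> x y) < 1/10^8"
proof -
  define T P where "T = real_of_int t" and "P = real_of_int (Pform t x y)"
  have "T > 204" and "0 < P" and "P \<le> T^2"
    using assms(1,4,5) unfolding T_def P_def by simp_all
  have "64 * T^3 < real_of_int (x * y)"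
    using assms(6) unfolding T_def
    by (metis of_int_less_iff of_int_mult of_int_power of_int_numeral)
  then have "(64 * T^3)^2 < real_of_int (x * y) ^ 2"
    using \<open>T > 204\<close> by (intro power_strict_mono) simp_all
  then have xi_large: "16 * (64 * T^3)^2 \<le> cmod (xi_fn t \<alpha> x y ^ 4)"
    using norm_xi_fn_power4_ge[of t \<alpha> x y] assms(1,2) by simp
  then have "xi_fn t \<alpha> x y \<noteq> 0"
    using \<open>T > 204\<close> by auto
  then have z: "cmod (z_fn t \<alpha> \<beta> x y) = 8 * P / cmod (xi_fn t \<alpha> x y ^ 4)"
    using z_fn_eq[of t \<alpha> \<beta> x y] assms(1-4) unfolding P_def by (simp add: norm_divide)
  show "0 < cmod (z_fn t \<alpha> \<beta> x y)"
    using z \<open>0 < P\<close> \<open>xi_fn t \<alpha> x y \<noteq> 0\<close> by simp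
  have "cmod (z_fn t \<alpha> \<beta> x y) \<le> 8 * T^2 / (16 * (64 * T^3)^2)"
    unfolding z using \<open>0 < P\<close> \<open>P \<le> T^2\<close> xi_large \<open>T > 204\<close> by (intro frac_le) simp_all
  also have "\<dots> = 1 / (8192 * T^4)"
    using \<open>T > 204\<close> by (simp add: field_simps power2_eq_square power3_eq_cube power4_eq_xxxx)
  also have "\<dots> < 1/10^8"
  proof -
    have "204^4 \<le> T^4"
      using \<open>T > 204\<close> by (intro power_mono) simp_all
    then have "10^8 < 8192 * T^4"
      by simp
    then show ?thesis
      by (intro divide_strict_left_mono) (use \<open>T > 204\<close> in simp_all)
  qed
  finally show "cmod (z_fn t \<alpha> \<beta> x y) < 1/10^8" .
qed

lemma exp_quarter_turns:
  "(\<lambda>k::nat. exp (of_nat k * of_real pi * \<i> / 2)) ` {0..3} = {1, \<i>, -1, -\<i>}"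
proof -
  have "exp (of_nat k * of_real pi * \<i> / 2) = \<i> ^ k" for k
  proof -
    have "exp (of_real pi * \<i> / 2) = \<i>"
      using cis_conv_exp[of "pi/2"] by (simp add: mult.commute)
    then show ?thesis
      by (metis exp_of_nat_mult times_divide_eq_right mult.assoc)
  qed
  then show ?thesis
    by (simp add: numeral_3_eq_3 atLeastAtMostSuc_conv insert_commute power_numeral_reduce)
qed

lemma nearest_quarter_turn_one:
  fixes u :: complex
  assumes near: "\<And>\<zeta>. \<zeta> \<in> {1, \<i>, -1, -\<i>} \<Longrightarrow> cmod (1 - u) \<le> cmod (\<zeta> - u)"
    and small: "cmod (1 - u^4) < 1/10^8" and nonzero: "u^4 \<noteq> 1"
  shows "cmod (1 - u) < pi/12 * cmod (1 - u^4)"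
proof -
  define a b c where "a = cmod (1 - u)" and "b = cmod (1 + u)" and "c = cmod (1 + u^2)"
  have "cmod (1 - u^4) = a * cmod (-1 - u) * (cmod (\<i> - u) * cmod (-\<i> - u))"
  proof -
    have "1 - u^4 = - ((1 - u) * (-1 - u) * ((\<i> - u) * (-\<i> - u)))"
      by (simp add: algebra_simps power4_eq_xxxx)
    then show ?thesis
      unfolding a_def by (simp only: norm_minus_cancel norm_mult)
  qed
  also have "\<dots> \<ge> a * a * (a * a)"
    unfolding a_def using near by (intro mult_mono) auto
  finally have "a^4 < (1/100)^4"
    using small by (simp add: power4_eq_xxxx)
  then have a_small: "a < 1/100"
    by (rule power_less_imp_less_base) simp
  have a_pos: "a > 0"
    using nonzero unfolding a_def by auto
  have "2 \<le> b + a" and "b \<le> 2 + a"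
    using norm_triangle_ineq[of "1 + u" "1 - u"] norm_triangle_ineq4[of 2 "1 - u"]
    unfolding a_def b_def by simp_all
  moreover have "2 \<le> c + a * b"
  proof -
    have "(1 + u^2) + (1 - u) * (1 + u) = 2"
      by (simp add: algebra_simps power2_eq_square)
    then show ?thesis
      using norm_triangle_ineq[of "1 + u^2" "(1 - u) * (1 + u)"]
      unfolding a_def b_def c_def by (simp only: norm_mult norm_numeral)
  qed
  ultimately have "b \<ge> 199/100" and "c \<ge> 197/100"
    using a_small a_pos mult_mono[of a "1/100" b "2 + 1/100"] by auto
  then have "(157/50) * (199/100 * (197/100)) \<le> pi * (b * c)"
    using pi_approx by (intro mult_mono) auto
  then have "1 < pi/12 * (b * c)"
    by simp
  moreover have "cmod (1 - u^4) = a * (b * c)"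
    unfolding a_def b_def c_def
    by (simp flip: norm_mult add: algebra_simps power4_eq_xxxx power2_eq_square)
  ultimately show ?thesis
    using a_pos unfolding a_def[symmetric] by (simp add: mult.left_commute)
qed

lemma nearest_quarter_turn:
  fixes w \<omega> :: complex
  assumes \<omega>: "\<omega> \<in> {1, \<i>, -1, -\<i>}"
    and near: "\<And>\<zeta>. \<zeta> \<in> {1, \<i>, -1, -\<i>} \<Longrightarrow> cmod (\<omega> - w) \<le> cmod (\<zeta> - w)"
    and small: "cmod (1 - w^4) < 1/10^8" and nonzero: "w^4 \<noteq> 1"
  shows "cmod (\<omega> - w) < pi/12 * cmod (1 - w^4)"
proof -
  have unit: "cmod \<omega> = 1" and "\<omega> \<noteq> 0" and "\<omega>^4 = 1"
    using \<omega> by auto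
  define u where "u = w / \<omega>"
  have dist: "cmod (\<zeta> - u) = cmod (\<zeta> * \<omega> - w)" for \<zeta>
  proof -
    have "\<zeta> - u = (\<zeta> * \<omega> - w) / \<omega>"
      using \<open>\<omega> \<noteq> 0\<close> by (simp add: u_def field_simps)
    then show ?thesis
      by (simp add: norm_divide unit)
  qed
  have "u^4 = w^4"
    using \<open>\<omega>^4 = 1\<close> by (simp add: u_def power_divide)
  moreover have "cmod (1 - u) \<le> cmod (\<zeta> - u)" if "\<zeta> \<in> {1, \<i>, -1, -\<i>}" for \<zeta>
    unfolding dist using near[of "\<zeta> * \<omega>"] that \<omega> by auto
  ultimately show ?thesis
    using nearest_quarter_turn_one[of u] small nonzero by (simp add: dist)
qed

theorem lemma3p2:
  fixes t x y :: int and \<alpha> \<beta> \<omega> :: complex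
  assumes "t > 204"
    and "\<alpha> ^ 4 = 1 + \<i> * complex_of_real (sqrt (of_int t))"
    and "\<beta> ^ 4 = -1 + \<i> * complex_of_real (sqrt (of_int t))"
    and "x > 0" and "y > 0"
    and "0 < Pform t x y" and "Pform t x y \<le> t^2"
    and "x * y > 64 * t^3"
    and "\<omega> \<in> {1, \<i>, -1, -\<i>}"
    and "cmod (\<omega> - eta_fn t \<beta> x y / xi_fn t \<alpha> x y) =
         Min ((\<lambda>k::nat. cmod (exp (of_nat k * of_real pi * \<i> / 2) - eta_fn t \<beta> x y / xi_fn t \<alpha> x y)) ` {0..3})"
  shows "cmod (\<omega> - eta_fn t \<beta> x y / xi_fn t \<alpha> x y) < pi / 12 * cmod (z_fn t \<alpha> \<beta> x y)"
proof -
  define w where "w = eta_fn t \<beta> x y / xi_fn t \<alpha> x y"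
  have z: "z_fn t \<alpha> \<beta> x y = 1 - w^4"
    unfolding z_fn_def w_def ..
  have min: "cmod (\<omega> - w) = Min ((\<lambda>\<zeta>. cmod (\<zeta> - w)) ` {1, \<i>, -1, -\<i>})"
    using assms(10) unfolding w_def[symmetric] exp_quarter_turns[symmetric] image_image .
  have near: "cmod (\<omega> - w) \<le> cmod (\<zeta> - w)" if "\<zeta> \<in> {1, \<i>, -1, -\<i>}" for \<zeta>
    unfolding min by (rule Min_le) (use that in auto)
  have "0 < cmod (1 - w^4)" and "cmod (1 - w^4) < 1/10^8"
    using norm_z_fn_bounds[OF assms(1-3,6-8)] unfolding z by simp_all
  then show ?thesis
    unfolding z w_def[symmetric] using nearest_quarter_turn[OF assms(9) near] by auto
qed

end
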